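(* Let $(X,V)$ and $(\overline{X},\overline{V})$ be global solutions of the discrete Motsch–Tadmor model (as in the context) whose initial data satisfy \[ \max\{\|\Delta^x(0)\|_F,\|\Delta^{\overline{x}}(0)\|_F\}<M,\quad \|\Delta^v(0)\|_F<\kappa\int_{\|\Delta^x(0)\|_F}^M\psi(s)\,ds,\quad \|\Delta^{\overline{v}}(0)\|_F<\kappa\int_{\|\Delta^{\overline{x}}(0)\|_F}^M\psi(s)\,ds. \] For $i,j\in\{1,\dots,N\}$ and $n\ge0$ let \[ \mathcal{I}_1^{ij}=h\kappa\sum_{l=1}^N(\phi_{il}(n)-\overline{\phi}_{il}(n))\Delta^v_{li}(n)-h\kappa\sum_{l=1}^N(\phi_{jl}(n)-\overline{\phi}_{jl}(n))\Delta^v_{lj}(n). \] Then \[ \sum_{i,j=1}^N\|\mathcal{I}_1^{ij}\|^2\le\frac{16h^2\kappa^2L_a^2M^2}{c_1^2}\Big(1+\frac{c_2}{c_1}\Big)^2\|\Delta^v(n)\|_F^2 . \]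
   Context: Discrete MT model: fix $N\ge1$, $d\ge1$, $\kappa>0$, $h>0$, and $a:[0,\infty)\to\mathbb{R}$ with constants $0<c_1\le c_2$, $c_1\le a\le c_2$, $|a(r_1)-a(r_2)|\le L_a|r_1-r_2|$ ($L_a>0$); $0<h<\min\{1,1/\kappa\}$. A solution satisfies $x_i(n+1)=x_i(n)+hv_i(n)$, $v_i(n+1)=v_i(n)+h\kappa\sum_j\phi_{ij}(n)(v_j(n)-v_i(n))$ with $\phi_{ij}(n)=\frac{a(\|x_i(n)-x_j(n)\|)}{\sum_ka(\|x_i(n)-x_k(n)\|)}$; $\overline{\phi}_{ij}(n)$ is defined likewise from $\overline{X}(n)$. Notation: $\Delta^x_{ij}=x_i-x_j$, $\Delta^v_{ij}=v_i-v_j$, similarly $\Delta^{\overline{x}},\Delta^{\overline{v}}$; $\|A\|_F=(\sum_{i,j}\|A_{ij}\|^2)^{1/2}$. Constants: $\|\phi\|_{\mathrm{Lip}}=\frac{L_a}{Nc_1}(1+\frac{c_2}{c_1})$, $M=\frac{1}{4N\|\phi\|_{\mathrm{Lip}}}$, $\psi(s)=1-\|\phi\|_{\mathrm{Lip}}Ns$. *)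

theory Defs
  imports "HOL-Analysis.Analysis"
begin

text \<open>Agents are indexed by 0..N-1 (nat), positions/velocities live in real^'d.
  A trajectory is a function  nat (time step) => nat (agent) => real^'d.\<close>

definition mt_phi :: "nat \<Rightarrow> (real \<Rightarrow> real) \<Rightarrow> (nat \<Rightarrow> real^'d) \<Rightarrow> nat \<Rightarrow> nat \<Rightarrow> real" where
  "mt_phi N a y i j = a (norm (y i - y j)) / (\<Sum>k<N. a (norm (y i - y k)))"

definition mt_solution ::
  "nat \<Rightarrow> real \<Rightarrow> real \<Rightarrow> (real \<Rightarrow> real) \<Rightarrow> (nat \<Rightarrow> nat \<Rightarrow> real^'d) \<Rightarrow> (nat \<Rightarrow> nat \<Rightarrow> real^'d) \<Rightarrow> bool" where
  "mt_solution N \<kappa> h a X V \<longleftrightarrow>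
     (\<forall>n i. i < N \<longrightarrow>
        X (Suc n) i = X n i + h *\<^sub>R V n i \<and>
        V (Suc n) i = V n i + (h * \<kappa>) *\<^sub>R (\<Sum>j<N. mt_phi N a (X n) i j *\<^sub>R (V n j - V n i)))"

definition frob_diff :: "nat \<Rightarrow> (nat \<Rightarrow> real^'d) \<Rightarrow> real" where
  "frob_diff N w = sqrt (\<Sum>i<N. \<Sum>j<N. (norm (w i - w j))\<^sup>2)"

definition phi_lip :: "nat \<Rightarrow> real \<Rightarrow> real \<Rightarrow> real \<Rightarrow> real" where
  "phi_lip N La c1 c2 = La / (real N * c1) * (1 + c2 / c1)"

definition Mconst :: "nat \<Rightarrow> real \<Rightarrow> real \<Rightarrow> real \<Rightarrow> real" where
  "Mconst N La c1 c2 = 1 / (4 * real N * phi_lip N La c1 c2)"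

definition psi :: "nat \<Rightarrow> real \<Rightarrow> real \<Rightarrow> real \<Rightarrow> real \<Rightarrow> real" where
  "psi N La c1 c2 s = 1 - phi_lip N La c1 c2 * real N * s"

end

theory Submission
  imports Defs
begin

(* Every weight phi_il lies within ||phi||_Lip * ||Delta^x||_F of 1/N. Along a solution the
   Lyapunov functional ||Delta^v(n)||_F + kappa * Psi(||Delta^x(n)||_F), with Psi the
   antiderivative of psi, does not increase; this keeps ||Delta^x(n)||_F below M for both
   solutions, so |phi_il(n) - phibar_il(n)| <= 2 ||phi||_Lip M = 1/(2N). A Cauchy-Schwarz
   estimate then bounds the sum of the ||I_1^ij||^2 by h^2 kappa^2 ||Delta^v(n)||_F^2, which is
   the claimed bound because L_a (1 + c2/c1) M / c1 = 1/4. *)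

lemma frob_diff_nonneg: "0 \<le> frob_diff N w"
  unfolding frob_diff_def by (simp add: sum_nonneg)

lemma frob_diff_sq: "(frob_diff N w)\<^sup>2 = (\<Sum>i<N. \<Sum>j<N. (norm (w i - w j))\<^sup>2)"
  unfolding frob_diff_def by (simp add: sum_nonneg)

lemma frob_diff_as_L2_set:
  "frob_diff N w = L2_set (\<lambda>p. norm (w (fst p) - w (snd p))) ({..<N} \<times> {..<N})"
  unfolding frob_diff_def L2_set_def by (simp add: sum.cartesian_product case_prod_beta)

lemma norm_diff_le_frob_diff: "i < N \<Longrightarrow> j < N \<Longrightarrow> norm (w i - w j) \<le> frob_diff N w"
  unfolding frob_diff_as_L2_set
  by (rule member_le_L2_set[where f = "\<lambda>p. norm (w (fst p) - w (snd p))" and i = "(i, j)", simplified]) auto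

lemma frob_diff_le_lincomb:
  assumes "\<And>i j. i < N \<Longrightarrow> j < N \<Longrightarrow> norm (w i - w j) \<le> \<alpha> * norm (u i - u j) + \<beta> * norm (z i - z j)"
    and "0 \<le> \<alpha>" "0 \<le> \<beta>"
  shows "frob_diff N w \<le> \<alpha> * frob_diff N u + \<beta> * frob_diff N z"
proof -
  let ?K = "{..<N} \<times> {..<N}"
  let ?d = "\<lambda>w p. norm (w (fst p) - w (snd p))"
  have "frob_diff N w \<le> L2_set (\<lambda>p. \<alpha> * ?d u p + \<beta> * ?d z p) ?K"
    unfolding frob_diff_as_L2_set by (rule L2_set_mono) (use assms in auto)
  also have "\<dots> \<le> L2_set (\<lambda>p. \<alpha> * ?d u p) ?K + L2_set (\<lambda>p. \<beta> * ?d z p) ?K"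
    by (rule L2_set_triangle_ineq)
  also have "\<dots> = \<alpha> * frob_diff N u + \<beta> * frob_diff N z"
    unfolding frob_diff_as_L2_set using assms(2,3) by (simp add: L2_set_right_distrib)
  finally show ?thesis .
qed

lemma frob_diff_scaleR: "frob_diff N (\<lambda>i. c *\<^sub>R w i) = \<bar>c\<bar> * frob_diff N w"
  unfolding frob_diff_def
  by (simp add: scaleR_diff_right[symmetric] power_mult_distrib sum_distrib_left[symmetric] real_sqrt_mult)

lemma frob_diff_sq_le_sum_norm_sq:
  "(frob_diff N w)\<^sup>2 \<le> 4 * real N * (\<Sum>i<N. (norm (w i))\<^sup>2)"
proof -
  have "(norm (w i - w j))\<^sup>2 \<le> 2 * (norm (w i))\<^sup>2 + 2 * (norm (w j))\<^sup>2" for i j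
  proof -
    have "(norm (w i - w j))\<^sup>2 \<le> (norm (w i) + norm (w j))\<^sup>2"
      by (simp add: norm_triangle_ineq4 power_mono)
    also have "\<dots> \<le> 2 * (norm (w i))\<^sup>2 + 2 * (norm (w j))\<^sup>2"
      using zero_le_power2[of "norm (w i) - norm (w j)"] unfolding power2_diff power2_sum by linarith
    finally show ?thesis .
  qed
  then have "(frob_diff N w)\<^sup>2 \<le> (\<Sum>i<N. \<Sum>j<N. 2 * (norm (w i))\<^sup>2 + 2 * (norm (w j))\<^sup>2)"
    unfolding frob_diff_sq by (intro sum_mono)
  also have "\<dots> = 4 * real N * (\<Sum>i<N. (norm (w i))\<^sup>2)"
    by (simp add: sum.distrib sum_distrib_left[symmetric] sum.swap[of _ "{..<N}" "{..<N}"] algebra_simps)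
  finally show ?thesis .
qed

lemma frob_diff_weighted_relative_le:
  assumes d: "\<And>i l. i < N \<Longrightarrow> l < N \<Longrightarrow> \<bar>d i l\<bar> \<le> \<delta>" and \<delta>: "0 \<le> \<delta>"
  shows "frob_diff N (\<lambda>i. \<Sum>l<N. d i l *\<^sub>R (v l - v i)) \<le> 2 * real N * \<delta> * frob_diff N v"
proof -
  define A where "A i = (\<Sum>l<N. d i l *\<^sub>R (v l - v i))" for i
  define s where "s i = (\<Sum>l<N. (norm (v l - v i))\<^sup>2)" for i
  have A_sq: "(norm (A i))\<^sup>2 \<le> \<delta>\<^sup>2 * real N * s i" if i: "i < N" for i
  proof -
    have "norm (A i) \<le> (\<Sum>l<N. \<bar>d i l\<bar> * norm (v l - v i))"
      unfolding A_def by (rule order_trans[OF norm_sum]) simp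
    also have "\<dots> \<le> \<delta> * (\<Sum>l<N. norm (v l - v i))"
      unfolding sum_distrib_left using d[OF i] by (intro sum_mono mult_right_mono) auto
    finally have "(norm (A i))\<^sup>2 \<le> (\<delta> * (\<Sum>l<N. norm (v l - v i)))\<^sup>2"
      by (simp add: power_mono)
    also have "\<dots> \<le> \<delta>\<^sup>2 * (s i * real N)"
      unfolding power_mult_distrib s_def
      using sum_squared_le_sum_of_squares[of "\<lambda>l. norm (v l - v i)" "{..<N}"]
      by (intro mult_left_mono) auto
    finally show ?thesis by (simp add: mult_ac)
  qed
  have "(frob_diff N A)\<^sup>2 \<le> 4 * real N * (\<Sum>i<N. (norm (A i))\<^sup>2)"
    by (rule frob_diff_sq_le_sum_norm_sq)
  also have "\<dots> \<le> 4 * real N * (\<Sum>i<N. \<delta>\<^sup>2 * real N * s i)"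
    using A_sq by (intro mult_left_mono sum_mono) auto
  also have "\<dots> = (2 * real N * \<delta> * frob_diff N v)\<^sup>2"
    unfolding power_mult_distrib frob_diff_sq s_def
    by (simp add: sum_distrib_left norm_minus_commute power2_eq_square mult_ac)
  finally show ?thesis
    unfolding A_def using \<delta> by (simp add: frob_diff_nonneg power2_le_iff_abs_le)
qed

lemma abs_quotient_diff_le:
  fixes a b S T m c :: real
  assumes m: "0 < m" "m \<le> S" "m \<le> T" and b: "0 \<le> b" "b \<le> c"
  shows "\<bar>a / S - b / T\<bar> \<le> \<bar>a - b\<bar> / m + c * \<bar>S - T\<bar> / m\<^sup>2"
proof -
  have ST: "0 < S" "0 < T" using m by auto
  have "a / S - b / T = (a - b) / S + b * (T - S) / (S * T)"
    using ST by (simp add: field_simps)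
  moreover have "\<bar>(a - b) / S\<bar> \<le> \<bar>a - b\<bar> / m"
    using ST m by (simp add: frac_le)
  moreover have "\<bar>b * (T - S) / (S * T)\<bar> \<le> c * \<bar>S - T\<bar> / m\<^sup>2"
  proof -
    have "\<bar>b * (T - S) / (S * T)\<bar> = b * \<bar>S - T\<bar> / (S * T)"
      using ST b by (simp add: abs_mult abs_minus_commute)
    also have "\<dots> \<le> c * \<bar>S - T\<bar> / (m * m)"
      using ST m b by (intro frac_le mult_mono mult_right_mono) auto
    finally show ?thesis by (simp add: power2_eq_square)
  qed
  ultimately show ?thesis by (smt (verit) abs_triangle_ineq)
qed

definition psi_primitive :: "real \<Rightarrow> real \<Rightarrow> real" where
  "psi_primitive q r = r - q * r\<^sup>2 / 2"

lemma integral_psi: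
  assumes "x \<le> y"
  shows "integral {x..y} (psi N La c1 c2) =
    psi_primitive (real N * phi_lip N La c1 c2) y - psi_primitive (real N * phi_lip N La c1 c2) x"
proof -
  let ?q = "real N * phi_lip N La c1 c2"
  have "((\<lambda>s. 1 - ?q * s) has_integral psi_primitive ?q y - psi_primitive ?q x) {x..y}"
  proof (rule fundamental_theorem_of_calculus[OF assms])
    fix s
    show "(psi_primitive ?q has_vector_derivative 1 - ?q * s) (at s within {x..y})"
      unfolding psi_primitive_def has_real_derivative_iff_has_vector_derivative[symmetric]
      by (auto intro!: derivative_eq_intros simp: power2_eq_square)
  qed
  then show ?thesis
    unfolding psi_def by (simp add: integral_unique mult_ac)
qed

lemma psi_primitive_le_tangent:
  assumes "0 \<le> q"
  shows "psi_primitive q y \<le> psi_primitive q x + (1 - q * x) * (y - x)"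
proof -
  have "psi_primitive q x + (1 - q * x) * (y - x) - psi_primitive q y = q * (y - x)\<^sup>2 / 2"
    unfolding psi_primitive_def by (simp add: power2_eq_square field_simps)
  moreover have "0 \<le> q * (y - x)\<^sup>2 / 2"
    using assms by simp
  ultimately show ?thesis by linarith
qed

lemma psi_primitive_mono:
  assumes "0 \<le> q" "x \<le> y" "q * (x + y) \<le> 2"
  shows "psi_primitive q x \<le> psi_primitive q y"
proof -
  have "psi_primitive q y - psi_primitive q x = (y - x) * (1 - q * (x + y) / 2)"
    unfolding psi_primitive_def by (simp add: power2_eq_square field_simps)
  also have "\<dots> \<ge> 0" using assms by simp
  finally show ?thesis by simp
qed

lemma lyapunov_decrease:
  fixes q \<kappa> h x v x' v' :: real
  assumes q: "0 \<le> q" "q * x \<le> 1" and \<kappa>: "0 \<le> \<kappa>"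
    and x_step: "x' \<le> x + h * v" and v_step: "v' \<le> (1 - h * \<kappa>) * v + h * \<kappa> * q * v * x"
  shows "v' + \<kappa> * psi_primitive q x' \<le> v + \<kappa> * psi_primitive q x"
proof -
  have "psi_primitive q x' \<le> psi_primitive q x + (1 - q * x) * (x' - x)"
    using q by (intro psi_primitive_le_tangent)
  also have "\<dots> \<le> psi_primitive q x + (1 - q * x) * (h * v)"
    using q x_step by (intro add_left_mono mult_left_mono) auto
  finally have "\<kappa> * psi_primitive q x' \<le> \<kappa> * psi_primitive q x + \<kappa> * ((1 - q * x) * (h * v))"
    using \<kappa> by (simp add: distrib_left[symmetric] mult_left_mono)
  moreover have "v' \<le> v - \<kappa> * ((1 - q * x) * (h * v))"
    using v_step by (simp add: algebra_simps)
  ultimately show ?thesis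
    by linarith
qed

lemma lyapunov_step:
  fixes q M \<kappa> h x v x' v' :: real
  assumes q: "0 < q" "q * M = 1 / 4" and \<kappa>: "0 < \<kappa>" and h: "0 < h" "h * \<kappa> \<le> 1"
    and x: "0 \<le> x" "x < M" and v: "0 \<le> v'"
    and x_step: "x' \<le> x + h * v" and v_step: "v' \<le> (1 - h * \<kappa>) * v + h * \<kappa> * q * v * x"
    and lyap: "v + \<kappa> * psi_primitive q x < \<kappa> * psi_primitive q M"
  shows "x' < M \<and> v' + \<kappa> * psi_primitive q x' < \<kappa> * psi_primitive q M"
proof
  have qx: "q * x \<le> 1 / 4"
    using q x by (metis less_imp_le mult_left_mono)
  show decrease: "v' + \<kappa> * psi_primitive q x' < \<kappa> * psi_primitive q M"
    using lyapunov_decrease[of q x \<kappa> x' h v v'] q qx \<kappa> x_step v_step lyap by simp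
  have "psi_primitive q x = x * (1 - q * x / 2)"
    unfolding psi_primitive_def by (simp add: power2_eq_square algebra_simps)
  then have "0 \<le> psi_primitive q x"
    using x qx by simp
  then have "v < \<kappa> * psi_primitive q M"
    using lyap \<kappa> mult_nonneg_nonneg[of \<kappa> "psi_primitive q x"] by linarith
  have "psi_primitive q M = M - (q * M) * M / 2"
    unfolding psi_primitive_def power2_eq_square by (simp add: mult.assoc)
  then have psi_M: "psi_primitive q M = 7 / 8 * M"
    using q(2) by simp
  have "h * v \<le> h * \<kappa> * psi_primitive q M"
    using h \<open>v < _\<close> by (simp add: mult.assoc)
  also have "\<dots> \<le> psi_primitive q M"
    using h \<kappa> psi_M x by (intro mult_left_le_one_le) auto
  finally have "x' < 2 * M"
    using psi_M x x_step by linarith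
  show "x' < M"
  proof (rule ccontr)
    assume "\<not> x' < M"
    have "q * (M + x') \<le> q * (3 * M)"
      using q \<open>x' < 2 * M\<close> by (intro mult_left_mono) auto
    also have "\<dots> \<le> 2"
      using q(2) by simp
    finally have "psi_primitive q M \<le> psi_primitive q x'"
      using q \<open>\<not> x' < M\<close> by (intro psi_primitive_mono) auto
    then have "\<kappa> * psi_primitive q M \<le> \<kappa> * psi_primitive q x'"
      using \<kappa> by simp
    then show False
      using decrease v by linarith
  qed
qed

lemma lyapunov_invariant:
  fixes q M \<kappa> h :: real and x v :: "nat \<Rightarrow> real"
  assumes q: "0 < q" "q * M = 1 / 4" and \<kappa>: "0 < \<kappa>" and h: "0 < h" "h * \<kappa> \<le> 1"
    and nonneg: "\<And>n. 0 \<le> x n" "\<And>n. 0 \<le> v n"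
    and x_step: "\<And>n. x (Suc n) \<le> x n + h * v n"
    and v_step: "\<And>n. v (Suc n) \<le> (1 - h * \<kappa>) * v n + h * \<kappa> * q * v n * x n"
    and init: "x 0 < M" "v 0 + \<kappa> * psi_primitive q (x 0) < \<kappa> * psi_primitive q M"
  shows "x n < M \<and> v n + \<kappa> * psi_primitive q (x n) < \<kappa> * psi_primitive q M"
proof (induction n)
  case 0
  show ?case using init by simp
next
  case (Suc n)
  then show ?case
    using lyapunov_step[OF q \<kappa> h nonneg(1) _ nonneg(2) x_step v_step] by blast
qed

lemma frob_diff_X_Suc_le:
  assumes sol: "mt_solution N \<kappa> h a X V" and h: "0 \<le> h"
  shows "frob_diff N (X (Suc n)) \<le> frob_diff N (X n) + h * frob_diff N (V n)"
proof -
  have "norm (X (Suc n) i - X (Suc n) j) \<le> 1 * norm (X n i - X n j) + h * norm (V n i - V n j)"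
    if "i < N" "j < N" for i j
  proof -
    have "X (Suc n) i - X (Suc n) j = (X n i - X n j) + h *\<^sub>R (V n i - V n j)"
      using sol that unfolding mt_solution_def by (simp add: algebra_simps)
    then show ?thesis
      using h norm_triangle_ineq[of "X n i - X n j" "h *\<^sub>R (V n i - V n j)"] by simp
  qed
  then show ?thesis
    using frob_diff_le_lincomb[of N "X (Suc n)" 1 "X n" h "V n"] h by simp
qed

locale mt_kernel =
  fixes N :: nat and c1 c2 La :: real and a :: "real \<Rightarrow> real"
  assumes N_pos: "1 \<le> N" and c1_pos: "0 < c1" and c1_le_c2: "c1 \<le> c2"
    and a_bounds: "\<And>r. 0 \<le> r \<Longrightarrow> c1 \<le> a r \<and> a r \<le> c2"
    and La_pos: "0 < La"
    and a_lipschitz: "\<And>r1 r2. 0 \<le> r1 \<Longrightarrow> 0 \<le> r2 \<Longrightarrow> \<bar>a r1 - a r2\<bar> \<le> La * \<bar>r1 - r2\<bar>"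
begin

abbreviation Lphi :: real where "Lphi \<equiv> phi_lip N La c1 c2"

lemma Lphi_pos: "0 < Lphi"
  unfolding phi_lip_def using N_pos c1_pos c1_le_c2 La_pos by (simp add: add_pos_nonneg)

lemma Lphi_Mconst: "real N * Lphi * Mconst N La c1 c2 = 1 / 4"
  unfolding Mconst_def using N_pos Lphi_pos by simp

lemma La_Mconst: "La / c1 * (1 + c2 / c1) * Mconst N La c1 c2 = 1 / 4"
proof -
  have "La / c1 * (1 + c2 / c1) = real N * Lphi"
    unfolding phi_lip_def using N_pos c1_pos by (simp add: field_simps)
  then show ?thesis
    using Lphi_Mconst by simp
qed

lemma a_norm_diff_le: "\<bar>a (norm u) - a (norm w)\<bar> \<le> La * norm (u - w)"
proof -
  have "\<bar>a (norm u) - a (norm w)\<bar> \<le> La * \<bar>norm u - norm w\<bar>"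
    by (rule a_lipschitz) auto
  also have "\<dots> \<le> La * norm (u - w)"
    using La_pos norm_triangle_ineq3 by (intro mult_left_mono) auto
  finally show ?thesis .
qed

lemma weight_sum_ge: "real N * c1 \<le> (\<Sum>k<N. a (norm (y i - y k)))"
  using sum_mono[of "{..<N}" "\<lambda>_. c1" "\<lambda>k. a (norm (y i - y k))"] a_bounds by simp

lemma weight_sum_pos: "0 < (\<Sum>k<N. a (norm (y i - y k)))"
  using weight_sum_ge[of y i] N_pos c1_pos mult_pos_pos[of "real N" c1] by linarith

lemma mt_phi_sum: "(\<Sum>l<N. mt_phi N a y i l) = 1"
  unfolding mt_phi_def using weight_sum_pos[of y i] by (simp add: sum_divide_distrib[symmetric])

lemma mt_phi_diff_right_le:
  "\<bar>mt_phi N a y i l - mt_phi N a y i k\<bar> \<le> La * norm (y k - y l) / (real N * c1)"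
proof -
  let ?S = "\<Sum>k<N. a (norm (y i - y k))"
  have "\<bar>mt_phi N a y i l - mt_phi N a y i k\<bar> = \<bar>a (norm (y i - y l)) - a (norm (y i - y k))\<bar> / ?S"
    unfolding mt_phi_def using weight_sum_pos[of y i] by (simp add: diff_divide_distrib[symmetric])
  also have "\<dots> \<le> La * norm (y k - y l) / ?S"
    using a_norm_diff_le[of "y i - y l" "y i - y k"] weight_sum_pos[of y i]
    by (intro divide_right_mono) auto
  also have "\<dots> \<le> La * norm (y k - y l) / (real N * c1)"
    using weight_sum_ge[of y i] weight_sum_pos[of y i] N_pos c1_pos La_pos
    by (intro divide_left_mono) auto
  finally show ?thesis .
qed

lemma mt_phi_diff_left_le: "\<bar>mt_phi N a y i l - mt_phi N a y j l\<bar> \<le> Lphi * norm (y i - y j)"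
proof -
  let ?e = "La * norm (y i - y j)"
  have a_diff: "\<bar>a (norm (y i - y k)) - a (norm (y j - y k))\<bar> \<le> ?e" for k
    using a_norm_diff_le[of "y i - y k" "y j - y k"] by simp
  have sum_diff: "\<bar>(\<Sum>k<N. a (norm (y i - y k))) - (\<Sum>k<N. a (norm (y j - y k)))\<bar> \<le> real N * ?e"
    using sum_abs[of "\<lambda>k. a (norm (y i - y k)) - a (norm (y j - y k))" "{..<N}"]
      sum_mono[of "{..<N}" "\<lambda>k. \<bar>a (norm (y i - y k)) - a (norm (y j - y k))\<bar>" "\<lambda>_. ?e"] a_diff
    by (simp add: sum_subtractf)
  have m: "0 < real N * c1" using N_pos c1_pos by simp
  have c2: "0 \<le> c2" using c1_pos c1_le_c2 by simp
  have "\<bar>mt_phi N a y i l - mt_phi N a y j l\<bar>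
      \<le> \<bar>a (norm (y i - y l)) - a (norm (y j - y l))\<bar> / (real N * c1)
        + c2 * \<bar>(\<Sum>k<N. a (norm (y i - y k))) - (\<Sum>k<N. a (norm (y j - y k)))\<bar> / (real N * c1)\<^sup>2"
    unfolding mt_phi_def using a_bounds[of "norm (y j - y l)"] c1_pos
    by (intro abs_quotient_diff_le[OF m weight_sum_ge weight_sum_ge]) auto
  also have "\<dots> \<le> ?e / (real N * c1) + c2 * (real N * ?e) / (real N * c1)\<^sup>2"
    using m c2 a_diff[of l] sum_diff by (intro add_mono divide_right_mono mult_left_mono) auto
  also have "\<dots> = Lphi * norm (y i - y j)"
    unfolding phi_lip_def using N_pos c1_pos by (simp add: power2_eq_square field_simps)
  finally show ?thesis .
qed

lemma mt_phi_near_uniform: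
  assumes l: "l < N"
  shows "\<bar>mt_phi N a y i l - 1 / real N\<bar> \<le> Lphi * frob_diff N y"
proof -
  have N: "0 < real N" using N_pos by simp
  have "mt_phi N a y i l - 1 / real N = (\<Sum>k<N. mt_phi N a y i l - mt_phi N a y i k) / real N"
    using N by (simp add: sum_subtractf mt_phi_sum field_simps)
  moreover have "\<bar>\<Sum>k<N. mt_phi N a y i l - mt_phi N a y i k\<bar> \<le> real N * (La * frob_diff N y / (real N * c1))"
  proof -
    have "\<bar>\<Sum>k<N. mt_phi N a y i l - mt_phi N a y i k\<bar> \<le> (\<Sum>k<N. La * frob_diff N y / (real N * c1))"
    proof (rule order_trans[OF sum_abs sum_mono])
      fix k assume "k \<in> {..<N}"
      then have "La * norm (y k - y l) \<le> La * frob_diff N y"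
        using l La_pos norm_diff_le_frob_diff[of k N l y] by simp
      then show "\<bar>mt_phi N a y i l - mt_phi N a y i k\<bar> \<le> La * frob_diff N y / (real N * c1)"
        using mt_phi_diff_right_le[of y i l k] N c1_pos
        by (meson divide_right_mono mult_pos_pos order_trans less_imp_le)
    qed
    then show ?thesis by simp
  qed
  ultimately have "\<bar>mt_phi N a y i l - 1 / real N\<bar> \<le> La / (real N * c1) * frob_diff N y"
    using N by (simp add: divide_le_eq)
  also have "\<dots> \<le> Lphi * frob_diff N y"
  proof (rule mult_right_mono[OF _ frob_diff_nonneg])
    have "0 \<le> La / (real N * c1) * (c2 / c1)"
      using La_pos N c1_pos c1_le_c2 by simp
    then show "La / (real N * c1) \<le> Lphi"
      unfolding phi_lip_def by (simp add: distrib_left)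
  qed
  finally show ?thesis .
qed

lemma mt_phi_diff_le_if_frob_diff_le_Mconst:
  assumes "frob_diff N y \<le> Mconst N La c1 c2" "frob_diff N z \<le> Mconst N La c1 c2" "l < N"
  shows "\<bar>mt_phi N a y i l - mt_phi N a z i l\<bar> \<le> 1 / (2 * real N)"
proof -
  have near: "\<bar>mt_phi N a w i l - 1 / real N\<bar> \<le> 1 / (4 * real N)"
    if "frob_diff N w \<le> Mconst N La c1 c2" for w
  proof -
    have "\<bar>mt_phi N a w i l - 1 / real N\<bar> \<le> Lphi * frob_diff N w"
      using mt_phi_near_uniform[OF \<open>l < N\<close>] .
    also have "\<dots> \<le> Lphi * Mconst N La c1 c2"
      using that Lphi_pos by simp
    also have "\<dots> = 1 / (4 * real N)"
      using Lphi_Mconst N_pos by (simp add: field_simps)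
    finally show ?thesis .
  qed
  have "1 / (2 * real N) = 2 * (1 / (4 * real N))"
    by simp
  then show ?thesis
    using near[OF assms(1)] near[OF assms(2)] by (simp only: abs_le_iff) linarith
qed

lemma frob_diff_alignment_diff_le:
  assumes "frob_diff N y \<le> Mconst N La c1 c2" "frob_diff N z \<le> Mconst N La c1 c2"
  shows "frob_diff N (\<lambda>i. \<Sum>l<N. (mt_phi N a y i l - mt_phi N a z i l) *\<^sub>R (v l - v i))
    \<le> frob_diff N v"
proof -
  have "frob_diff N (\<lambda>i. \<Sum>l<N. (mt_phi N a y i l - mt_phi N a z i l) *\<^sub>R (v l - v i))
      \<le> 2 * real N * (1 / (2 * real N)) * frob_diff N v"
    using assms by (intro frob_diff_weighted_relative_le mt_phi_diff_le_if_frob_diff_le_Mconst) auto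
  then show ?thesis
    using N_pos by simp
qed

lemma mt_velocity_diff:
  assumes sol: "mt_solution N \<kappa> h a X V" and ij: "i < N" "j < N"
  shows "V (Suc n) i - V (Suc n) j = (1 - h * \<kappa>) *\<^sub>R (V n i - V n j)
    + (h * \<kappa>) *\<^sub>R (\<Sum>l<N. (mt_phi N a (X n) i l - mt_phi N a (X n) j l) *\<^sub>R (V n l - V n 0))"
proof -
  define S where "S k = (\<Sum>l<N. mt_phi N a (X n) k l *\<^sub>R (V n l - V n 0))" for k
  \<comment> \<open>the rows of the weight matrix sum to 1, so velocities may be measured relative to agent 0\<close>
  have rel: "(\<Sum>l<N. mt_phi N a (X n) k l *\<^sub>R (V n l - V n k)) = S k - (V n k - V n 0)" for k
  proof -
    have "(\<Sum>l<N. mt_phi N a (X n) k l *\<^sub>R (V n l - V n k))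
        = (\<Sum>l<N. mt_phi N a (X n) k l *\<^sub>R (V n l - V n 0) - mt_phi N a (X n) k l *\<^sub>R (V n k - V n 0))"
      by (rule sum.cong) (auto simp: scaleR_diff_right[symmetric])
    also have "\<dots> = S k - (\<Sum>l<N. mt_phi N a (X n) k l) *\<^sub>R (V n k - V n 0)"
      unfolding S_def by (simp add: sum_subtractf scaleR_sum_left)
    finally show ?thesis by (simp add: mt_phi_sum)
  qed
  have "V (Suc n) k = V n k + (h * \<kappa>) *\<^sub>R (S k - (V n k - V n 0))" if "k < N" for k
    using sol that rel unfolding mt_solution_def by auto
  then have "V (Suc n) i - V (Suc n) j = (1 - h * \<kappa>) *\<^sub>R (V n i - V n j) + (h * \<kappa>) *\<^sub>R (S i - S j)"
    using ij by (simp add: algebra_simps)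
  then show ?thesis
    unfolding S_def by (simp add: sum_subtractf scaleR_diff_left)
qed

lemma frob_diff_V_Suc_le:
  assumes sol: "mt_solution N \<kappa> h a X V" and h\<kappa>: "0 \<le> h * \<kappa>" "h * \<kappa> \<le> 1"
  shows "frob_diff N (V (Suc n)) \<le> (1 - h * \<kappa>) * frob_diff N (V n)
    + h * \<kappa> * (real N * Lphi) * frob_diff N (V n) * frob_diff N (X n)"
proof -
  let ?c = "h * \<kappa> * (real N * Lphi * frob_diff N (V n))"
  have "norm (V (Suc n) i - V (Suc n) j) \<le> (1 - h * \<kappa>) * norm (V n i - V n j) + ?c * norm (X n i - X n j)"
    if ij: "i < N" "j < N" for i j
  proof -
    let ?D = "\<Sum>l<N. (mt_phi N a (X n) i l - mt_phi N a (X n) j l) *\<^sub>R (V n l - V n 0)"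
    have "norm ?D \<le> (\<Sum>l<N. \<bar>mt_phi N a (X n) i l - mt_phi N a (X n) j l\<bar> * norm (V n l - V n 0))"
      by (rule order_trans[OF norm_sum]) simp
    also have "\<dots> \<le> (\<Sum>l<N. Lphi * norm (X n i - X n j) * frob_diff N (V n))"
      using N_pos Lphi_pos
      by (intro sum_mono mult_mono mt_phi_diff_left_le norm_diff_le_frob_diff) auto
    finally have "norm ?D \<le> real N * Lphi * frob_diff N (V n) * norm (X n i - X n j)"
      by (simp add: mult_ac)
    then have "norm ((h * \<kappa>) *\<^sub>R ?D) \<le> h * \<kappa> * (real N * Lphi * frob_diff N (V n) * norm (X n i - X n j))"
      unfolding norm_scaleR abs_of_nonneg[OF h\<kappa>(1)] by (rule mult_left_mono[OF _ h\<kappa>(1)])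
    also have "\<dots> = ?c * norm (X n i - X n j)"
      by (simp add: mult_ac)
    finally have "norm ((h * \<kappa>) *\<^sub>R ?D) \<le> ?c * norm (X n i - X n j)" .
    then show ?thesis
      unfolding mt_velocity_diff[OF sol ij]
      using h\<kappa> norm_triangle_ineq[of "(1 - h * \<kappa>) *\<^sub>R (V n i - V n j)" "(h * \<kappa>) *\<^sub>R ?D"] by simp
  qed
  then have "frob_diff N (V (Suc n)) \<le> (1 - h * \<kappa>) * frob_diff N (V n) + ?c * frob_diff N (X n)"
    using h\<kappa> Lphi_pos frob_diff_nonneg[of N "V n"] by (intro frob_diff_le_lincomb) auto
  then show ?thesis by (simp add: mult_ac)
qed

lemma frob_diff_X_lt_Mconst:
  assumes sol: "mt_solution N \<kappa> h a X V"
    and \<kappa>: "0 < \<kappa>" and h: "0 < h" "h * \<kappa> \<le> 1"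
    and init_x: "frob_diff N (X 0) < Mconst N La c1 c2"
    and init_v: "frob_diff N (V 0) < \<kappa> * integral {frob_diff N (X 0)..Mconst N La c1 c2} (psi N La c1 c2)"
  shows "frob_diff N (X n) < Mconst N La c1 c2"
proof -
  let ?q = "real N * Lphi"
  have q: "0 < ?q" "?q * Mconst N La c1 c2 = 1 / 4"
    using N_pos Lphi_pos Lphi_Mconst by auto
  have "frob_diff N (V 0) + \<kappa> * psi_primitive ?q (frob_diff N (X 0)) < \<kappa> * psi_primitive ?q (Mconst N La c1 c2)"
    using init_v integral_psi[of "frob_diff N (X 0)" "Mconst N La c1 c2" N La c1 c2] init_x
    by (simp add: algebra_simps)
  moreover have "0 \<le> h * \<kappa>"
    using h \<kappa> by simp
  ultimately show ?thesis
    using lyapunov_invariant[OF q \<kappa> h frob_diff_nonneg frob_diff_nonneg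
        frob_diff_X_Suc_le[OF sol less_imp_le[OF h(1)]] frob_diff_V_Suc_le[OF sol _ h(2)] init_x]
    by blast
qed

end

theorem lemma4p4:
  fixes N :: nat and \<kappa> h c1 c2 La :: real and a :: "real \<Rightarrow> real"
    and X V Xb Vb :: "nat \<Rightarrow> nat \<Rightarrow> real^'d"
  assumes N: "N \<ge> 1"
    and kappa: "\<kappa> > 0" and hpos: "h > 0" and hsmall: "h < min 1 (1 / \<kappa>)"
    and c1: "0 < c1" and c12: "c1 \<le> c2"
    and a_bd: "\<And>r. r \<ge> 0 \<Longrightarrow> c1 \<le> a r \<and> a r \<le> c2"
    and La: "La > 0"
    and a_lip: "\<And>r1 r2. r1 \<ge> 0 \<Longrightarrow> r2 \<ge> 0 \<Longrightarrow> \<bar>a r1 - a r2\<bar> \<le> La * \<bar>r1 - r2\<bar>"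
    and sol: "mt_solution N \<kappa> h a X V"
    and solb: "mt_solution N \<kappa> h a Xb Vb"
    and init_x: "max (frob_diff N (X 0)) (frob_diff N (Xb 0)) < Mconst N La c1 c2"
    and init_v: "frob_diff N (V 0) <
        \<kappa> * integral {frob_diff N (X 0)..Mconst N La c1 c2} (psi N La c1 c2)"
    and init_vb: "frob_diff N (Vb 0) <
        \<kappa> * integral {frob_diff N (Xb 0)..Mconst N La c1 c2} (psi N La c1 c2)"
  shows "(\<Sum>i<N. \<Sum>j<N. (norm (
            (h * \<kappa>) *\<^sub>R (\<Sum>l<N. (mt_phi N a (X n) i l - mt_phi N a (Xb n) i l) *\<^sub>R (V n l - V n i))
          - (h * \<kappa>) *\<^sub>R (\<Sum>l<N. (mt_phi N a (X n) j l - mt_phi N a (Xb n) j l) *\<^sub>R (V n l - V n j))))\<^sup>2)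
     \<le> 16 * h\<^sup>2 * \<kappa>\<^sup>2 * La\<^sup>2 * (Mconst N La c1 c2)\<^sup>2 / c1\<^sup>2 * (1 + c2 / c1)\<^sup>2 * (frob_diff N (V n))\<^sup>2"
proof -
  interpret mt_kernel N c1 c2 La a
    by unfold_locales (use N c1 c12 a_bd La a_lip in auto)
  have h\<kappa>: "0 \<le> h * \<kappa>" "h * \<kappa> \<le> 1"
    using hpos kappa hsmall by (simp_all add: field_simps)
  have "frob_diff N (X n) \<le> Mconst N La c1 c2" "frob_diff N (Xb n) \<le> Mconst N La c1 c2"
    using frob_diff_X_lt_Mconst[OF sol kappa hpos h\<kappa>(2) _ init_v]
      frob_diff_X_lt_Mconst[OF solb kappa hpos h\<kappa>(2) _ init_vb] init_x
    by (auto simp: less_imp_le)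
  then have "frob_diff N (\<lambda>i. (h * \<kappa>) *\<^sub>R
        (\<Sum>l<N. (mt_phi N a (X n) i l - mt_phi N a (Xb n) i l) *\<^sub>R (V n l - V n i)))
      \<le> h * \<kappa> * frob_diff N (V n)"
    unfolding frob_diff_scaleR abs_of_nonneg[OF h\<kappa>(1)]
    by (intro mult_left_mono[OF _ h\<kappa>(1)] frob_diff_alignment_diff_le)
  then have "(frob_diff N (\<lambda>i. (h * \<kappa>) *\<^sub>R
        (\<Sum>l<N. (mt_phi N a (X n) i l - mt_phi N a (Xb n) i l) *\<^sub>R (V n l - V n i))))\<^sup>2
      \<le> (h * \<kappa> * frob_diff N (V n))\<^sup>2"
    by (intro power_mono frob_diff_nonneg)
  moreover have "16 * h\<^sup>2 * \<kappa>\<^sup>2 * La\<^sup>2 * (Mconst N La c1 c2)\<^sup>2 / c1\<^sup>2 * (1 + c2 / c1)\<^sup>2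
      = (h * \<kappa>)\<^sup>2 * (4 * (La / c1 * (1 + c2 / c1) * Mconst N La c1 c2))\<^sup>2"
    by (simp add: power2_eq_square field_simps)
  ultimately show ?thesis
    unfolding La_Mconst by (simp add: frob_diff_sq power_mult_distrib)
qed

end
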